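(* Let $d,k$ be integers with $2\leq d\leq\frac{k+1}{2}$, $\Sigma_k=\{\sigma_1,\ldots,\sigma_k\}$, $\Sigma_d=\{\sigma_1,\ldots,\sigma_d\}$, $n\geq1$, and let $\mathcal{G}\subseteq\Sigma_k^n$. Put $\mathcal{G}'=\mathcal{G}\cap\Sigma_d^n$ and $\mathcal{G}''=\{f(g_1)f(g_2)\cdots f(g_n)\mid g=g_1\cdots g_n\in\mathcal{G}\}$, where $f:\Sigma_k\to\Sigma_k$ is $f(\sigma_i)=\sigma_{\max\{i,d\}}$. Suppose $\mathcal{G}$ is closed under replacing $\sigma_i$ by $\sigma_j$ for any $i>d$ and $j\in[k]$, i.e. whenever $g\in\mathcal{G}$ has the letter $\sigma_i$ with $i>d$ in some coordinate, the word obtained by changing that coordinate to any letter of $\Sigma_k$ also lies in $\mathcal{G}$. Then either $|\mathcal{G}'|=|\mathcal{G}''|=0$ or $\log_{k-d+1}|\mathcal{G}''|\leq\log_d|\mathcal{G}'|$. *)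

theory Defs
  imports Complex_Main
begin

text \<open>Letters sigma_i are encoded by the natural number i; words of length n over
  Sigma_k are lists of length n with entries in {1..k}.\<close>

definition words :: "nat \<Rightarrow> nat \<Rightarrow> nat list set" where
  "words k n = {w. length w = n \<and> set w \<subseteq> {1..k}}"

definition fmap :: "nat \<Rightarrow> nat \<Rightarrow> nat" where
  "fmap d i = max i d"

end

theory Submission
  imports Defs
begin

text \<open>With a = log_d (k - d + 1) \<ge> 1 one shows |G''| \<le> |G'|^a by induction on n, splitting words
  by their first letter. Let H be the set of tails following a letter \<le> d and F the set of tails
  following the letter d + 1 (primes applied to H and F as to G). By closedness F is contained in the
  tails following every letter, so |G''| \<le> |H''| + (k - d) |F''| while |G'| \<ge> |H'| + (d - 1) |F'|.
  The induction step then reduces to the convexity estimate u^a + (d^a - 1) v^a \<le> (u + (d - 1) v)^a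
  for 0 \<le> v \<le> u.\<close>

lemma finite_words: "finite (words k n)"
  unfolding words_def
  by (rule finite_subset[OF _ finite_lists_length_eq[of "{1..k}" n]]) auto

lemma card_UN_common_subset_le:
  assumes "finite I" "I \<noteq> {}" "\<And>i. i \<in> I \<Longrightarrow> finite (A i)" "\<And>i. i \<in> I \<Longrightarrow> B \<subseteq> A i"
  shows "card (\<Union>i\<in>I. A i) + (card I - 1) * card B \<le> (\<Sum>i\<in>I. card (A i))"
  using assms
proof (induction I rule: finite_ne_induct)
  case (singleton i)
  then show ?case by simp
next
  case (insert i I)
  let ?U = "\<Union>j\<in>I. A j"
  have "finite (A i)" "finite ?U" using insert.prems insert.hyps(1) by auto
  moreover have "B \<subseteq> A i \<inter> ?U" using insert.prems insert.hyps(2) by blast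
  ultimately have "card (A i \<union> ?U) + card B \<le> card (A i) + card ?U"
    using card_Un_Int card_mono[of "A i \<inter> ?U" B] by fastforce
  moreover have "card ?U + (card I - 1) * card B \<le> (\<Sum>j\<in>I. card (A j))"
    using insert.IH insert.prems by auto
  moreover have "card I * card B = (card I - 1) * card B + card B"
    using insert.hyps(1,2) by (cases "card I") auto
  ultimately show ?case using insert.hyps(1,3) by simp
qed

lemma powr_add_diff_mono:
  fixes a c x y :: real
  assumes "0 \<le> c" "1 \<le> a" "0 < x" "x \<le> y"
  shows "(x + c) powr a - x powr a \<le> (y + c) powr a - y powr a"
proof (rule DERIV_nonneg_imp_nondecreasing[OF \<open>x \<le> y\<close>])
  fix z :: real
  assume z: "x \<le> z" "z \<le> y"
  have "((\<lambda>z. (z + c) powr a - z powr a) has_real_derivative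
          a * (z + c) powr (a - 1) - a * z powr (a - 1)) (at z)"
    using z assms by (auto intro!: derivative_eq_intros)
  moreover have "z powr (a - 1) \<le> (z + c) powr (a - 1)"
    using z assms by (intro powr_mono2) auto
  ultimately show "\<exists>D. ((\<lambda>z. (z + c) powr a - z powr a) has_real_derivative D) (at z) \<and> 0 \<le> D"
    using assms by fastforce
qed

lemma powr_add_mult_ge:
  fixes a c u v :: real
  assumes "0 \<le> v" "v \<le> u" "1 \<le> a" "0 \<le> c"
  shows "u powr a + ((1 + c) powr a - 1) * v powr a \<le> (u + c * v) powr a"
proof (cases "v = 0")
  case True
  then show ?thesis using assms by simp
next
  case False
  with assms have v: "0 < v" by simp
  define s where "s = u / v"
  have s: "1 \<le> s" "u = s * v" using v assms by (simp_all add: s_def)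
  have "((1 + c) powr a - 1) * v powr a \<le> ((s + c) powr a - s powr a) * v powr a"
    using powr_add_diff_mono[of c a 1 s] s assms by (intro mult_right_mono) auto
  also have "\<dots> = ((s + c) * v) powr a - (s * v) powr a"
    using v s assms by (simp add: powr_mult left_diff_distrib)
  also have "\<dots> = (u + c * v) powr a - u powr a"
    using s by (simp add: algebra_simps)
  finally show ?thesis by simp
qed

lemma log_le_log_if_le_powr_log:
  fixes b c x y :: real
  assumes "1 < b" "1 < c" "1 \<le> x" "0 < y" "y \<le> x powr log b c"
  shows "log c y \<le> log b x"
proof -
  have "log c y \<le> log c (x powr log b c)"
    using assms by (subst log_le_cancel_iff) auto
  also have "\<dots> = log b x"
    using assms by (simp add: log_powr log_def)
  finally show ?thesis .
qed

definition replace_closed :: "nat \<Rightarrow> nat \<Rightarrow> nat \<Rightarrow> nat list set \<Rightarrow> bool" where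
  "replace_closed d k n G \<longleftrightarrow>
     (\<forall>g p j. g \<in> G \<longrightarrow> p < n \<longrightarrow> d < g ! p \<longrightarrow> j \<in> {1..k} \<longrightarrow> g[p := j] \<in> G)"

definition residual :: "nat list set \<Rightarrow> nat \<Rightarrow> nat list set" where
  "residual G b = {t. b # t \<in> G}"

lemma residual_subset_words: "G \<subseteq> words k (Suc n) \<Longrightarrow> residual G b \<subseteq> words k n"
  unfolding residual_def words_def by force

lemma finite_residual: "G \<subseteq> words k (Suc n) \<Longrightarrow> finite (residual G b)"
  using residual_subset_words finite_words finite_subset by metis

lemma replace_closed_residual:
  assumes "replace_closed d k (Suc n) G"
  shows "replace_closed d k n (residual G b)"
  unfolding replace_closed_def residual_def
proof (intro allI impI, simp)
  fix t p j
  assume "b # t \<in> G" "p < n" "d < t ! p" "Suc 0 \<le> j \<and> j \<le> k"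
  then show "b # t[p := j] \<in> G"
    using assms unfolding replace_closed_def by (metis Suc_mono atLeastAtMost_iff
        list_update_code(3) nth_Cons_Suc One_nat_def)
qed

lemma replace_closed_UN:
  "(\<And>b. b \<in> B \<Longrightarrow> replace_closed d k n (A b)) \<Longrightarrow> replace_closed d k n (\<Union>b\<in>B. A b)"
  unfolding replace_closed_def by blast

lemma residual_subset_if_gt:
  assumes "replace_closed d k (Suc n) G" "d < c" "b \<in> {1..k}"
  shows "residual G c \<subseteq> residual G b"
proof
  fix t
  assume "t \<in> residual G c"
  then have "(c # t)[0 := b] \<in> G"
    using assms unfolding replace_closed_def residual_def by (metis mem_Collect_eq nth_Cons_0 zero_less_Suc)
  then show "t \<in> residual G b" by (simp add: residual_def)
qed

lemma card_Int_words_Suc: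
  "card (G \<inter> words d (Suc n)) = (\<Sum>b\<in>{1..d}. card (residual G b \<inter> words d n))"
proof -
  have "G \<inter> words d (Suc n) = (\<Union>b\<in>{1..d}. Cons b ` (residual G b \<inter> words d n))"
  proof (intro equalityI subsetI)
    fix w
    assume w: "w \<in> G \<inter> words d (Suc n)"
    then obtain b t where "w = b # t"
      by (cases w) (auto simp: words_def)
    with w show "w \<in> (\<Union>b\<in>{1..d}. Cons b ` (residual G b \<inter> words d n))"
      by (auto simp: residual_def words_def)
  qed (auto simp: residual_def words_def)
  moreover have "card (\<Union>b\<in>{1..d}. Cons b ` (residual G b \<inter> words d n))
      = (\<Sum>b\<in>{1..d}. card (Cons b ` (residual G b \<inter> words d n)))"
    using finite_words by (intro card_UN_disjoint) auto
  ultimately show ?thesis by (simp add: card_image)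
qed

lemma card_Int_words_Suc_ge:
  assumes "replace_closed d k (Suc n) G" "1 \<le> d" "d \<le> k"
  shows "card ((\<Union>b\<in>{1..d}. residual G b) \<inter> words d n)
           + (d - 1) * card (residual G (Suc d) \<inter> words d n)
         \<le> card (G \<inter> words d (Suc n))"
proof -
  have "residual G (Suc d) \<subseteq> residual G b" if "b \<in> {1..d}" for b
    using residual_subset_if_gt[OF assms(1)] that assms(3) by simp
  then have "card (\<Union>b\<in>{1..d}. residual G b \<inter> words d n)
          + (card {1..d} - 1) * card (residual G (Suc d) \<inter> words d n)
        \<le> (\<Sum>b\<in>{1..d}. card (residual G b \<inter> words d n))"
    using assms(2) finite_words by (intro card_UN_common_subset_le) auto
  then show ?thesis by (simp add: card_Int_words_Suc Int_UN_distrib2)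
qed

lemma card_fmap_image_le:
  assumes G: "G \<subseteq> words k (Suc n)" and closed: "replace_closed d k (Suc n) G" and "d < k"
  shows "card (map (fmap d) ` G)
           \<le> card (map (fmap d) ` (\<Union>b\<in>{1..d}. residual G b))
             + (k - d) * card (map (fmap d) ` residual G (Suc d))"
proof -
  let ?f = "map (fmap d)"
  let ?H = "\<Union>b\<in>{1..d}. residual G b" and ?F = "residual G (Suc d)"
  have "?f ` G \<subseteq> Cons d ` ?f ` ?H \<union> (\<Union>c\<in>{d+1..k}. Cons c ` ?f ` ?F)" (is "_ \<subseteq> ?A \<union> ?B")
  proof
    fix y
    assume "y \<in> ?f ` G"
    then obtain w where "w \<in> G" "y = ?f w" by blast
    moreover obtain b t where "w = b # t"
      using \<open>w \<in> G\<close> G by (cases w) (auto simp: words_def)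
    ultimately have bt: "b # t \<in> G" "y = fmap d b # ?f t" "b \<in> {1..k}"
      using G by (auto simp: words_def)
    show "y \<in> ?A \<union> ?B"
    proof (cases "b \<le> d")
      case True
      then have "t \<in> ?H" using bt by (auto simp: residual_def)
      then show ?thesis using bt True by (simp add: fmap_def)
    next
      case False
      then have "t \<in> ?F"
        using residual_subset_if_gt[OF closed, of b "Suc d"] bt \<open>d < k\<close> by (auto simp: residual_def)
      then have "y \<in> Cons b ` ?f ` ?F" using bt False by (simp add: fmap_def)
      moreover have "b \<in> {d+1..k}" using bt False by simp
      ultimately show ?thesis by blast
    qed
  qed
  moreover have "finite (?A \<union> ?B)"
    using finite_residual[OF G] by simp
  ultimately have "card (?f ` G) \<le> card (?A \<union> ?B)"
    by (rule card_mono[rotated])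
  also have "\<dots> \<le> card ?A + card ?B"
    by (rule card_Un_le)
  also have "card ?B \<le> (\<Sum>c\<in>{d+1..k}. card (Cons c ` ?f ` ?F))"
    by (rule card_UN_le) simp
  finally show ?thesis by (simp add: card_image)
qed

lemma card_fmap_image_le_powr:
  fixes a :: real
  assumes d: "2 \<le> d" "d < k" and a: "1 \<le> a" "real d powr a = real (k - d + 1)"
  shows "G \<subseteq> words k n \<Longrightarrow> replace_closed d k n G \<Longrightarrow>
           real (card (map (fmap d) ` G)) \<le> real (card (G \<inter> words d n)) powr a"
proof (induction n arbitrary: G)
  case 0
  have "words m 0 = {[]}" for m
    by (auto simp: words_def)
  with 0 have "G = {} \<or> G = {[]}" "G \<inter> words d 0 = G"
    by (auto simp: subset_singleton_iff)
  then show ?case by (elim disjE) simp_all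
next
  case (Suc n)
  let ?f = "map (fmap d)" and ?W = "words d n"
  let ?H = "\<Union>b\<in>{1..d}. residual G b" and ?F = "residual G (Suc d)"
  define u where "u = real (card (?H \<inter> ?W))"
  define v where "v = real (card (?F \<inter> ?W))"
  have H: "?H \<subseteq> words k n" "replace_closed d k n ?H"
    using residual_subset_words[OF Suc.prems(1)]
    by (blast, intro replace_closed_UN replace_closed_residual Suc.prems(2))
  have F: "?F \<subseteq> words k n" "replace_closed d k n ?F"
    using residual_subset_words[OF Suc.prems(1)]
    by (blast, intro replace_closed_residual Suc.prems(2))
  have "?F \<subseteq> residual G 1"
    using residual_subset_if_gt[OF Suc.prems(2)] d by simp
  also have "\<dots> \<subseteq> ?H"
    using d by (intro UN_upper) simp
  finally have "?F \<inter> ?W \<subseteq> ?H \<inter> ?W"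
    by blast
  then have "v \<le> u"
    unfolding u_def v_def using H(1) finite_words finite_subset by (metis card_mono inf.coboundedI1 of_nat_le_iff)
  have "real (card (?f ` G)) \<le> real (card (?f ` ?H)) + real (k - d) * real (card (?f ` ?F))"
    using card_fmap_image_le[OF Suc.prems] d by (metis of_nat_add of_nat_mult of_nat_le_iff)
  also have "\<dots> \<le> u powr a + ((1 + real (d - 1)) powr a - 1) * v powr a"
    using Suc.IH[OF H] Suc.IH[OF F] d a
    by (intro add_mono mult_left_mono) (auto simp: u_def v_def of_nat_diff)
  also have "\<dots> \<le> (u + real (d - 1) * v) powr a"
    using \<open>v \<le> u\<close> a by (intro powr_add_mult_ge) (auto simp: v_def)
  also have "\<dots> \<le> real (card (G \<inter> words d (Suc n))) powr a"
  proof (rule powr_mono2)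
    show "u + real (d - 1) * v \<le> real (card (G \<inter> words d (Suc n)))"
    proof -
      have "card (?H \<inter> ?W) + (d - 1) * card (?F \<inter> ?W) \<le> card (G \<inter> words d (Suc n))"
        using d by (intro card_Int_words_Suc_ge[OF Suc.prems(2)]) auto
      then show ?thesis
        unfolding u_def v_def by (metis of_nat_add of_nat_mult of_nat_le_iff)
    qed
  qed (use a in \<open>auto simp: u_def v_def\<close>)
  finally show ?case .
qed

theorem lemma12:
  fixes d k n :: nat and G :: "nat list set"
  assumes "2 \<le> d" and "2 * d \<le> k + 1" and "n \<ge> 1"
    and "G \<subseteq> words k n"
    and closed: "\<And>g p j. g \<in> G \<Longrightarrow> p < n \<Longrightarrow> g ! p > d \<Longrightarrow> j \<in> {1..k} \<Longrightarrow> g[p := j] \<in> G"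
  shows "(card (G \<inter> words d n) = 0 \<and> card (map (fmap d) ` G) = 0) \<or>
         log (real (k - d + 1)) (real (card (map (fmap d) ` G)))
           \<le> log (real d) (real (card (G \<inter> words d n)))"
proof -
  define x where "x = real (card (G \<inter> words d n))"
  define y where "y = real (card (map (fmap d) ` G))"
  define a where "a = log (real d) (real (k - d + 1))"
  have "real d \<le> real (k - d + 1)" "1 < real d" using assms(1,2) by auto
  then have "1 \<le> a" "real d powr a = real (k - d + 1)"
    by (simp_all add: a_def)
  then have "y \<le> x powr a"
    unfolding x_def y_def using assms closed
    by (intro card_fmap_image_le_powr) (auto simp: replace_closed_def)
  consider "x = 0" | "1 \<le> x" "y = 0" | "1 \<le> x" "0 < y"
    unfolding x_def y_def by fastforce
  then show ?thesis
  proof cases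
    case 1
    then show ?thesis using \<open>y \<le> x powr a\<close> by (simp add: x_def y_def)
  next
    case 2
    then show ?thesis using \<open>1 < real d\<close> by (simp add: x_def y_def log_def)
  next
    case 3
    then show ?thesis using \<open>y \<le> x powr a\<close> \<open>1 < real d\<close> \<open>real d \<le> _\<close>
      by (intro disjI2 log_le_log_if_le_powr_log) (auto simp: x_def y_def a_def)
  qed
qed

end
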